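(* Let $M$ be an object of an abelian category $\mathcal{A}$. Then: (1) $M$ is strongly self-Rickart if and only if $M$ is self-Rickart and weak duo. (2) $M$ is dual strongly self-Rickart if and only if $M$ is dual self-Rickart and weak duo.
   Context: A morphism $f:X\to Y$ is a section if $f'f=1_X$ for some $f'$, a retraction if $ff'=1_Y$ for some $f'$. A monomorphism $k:K\to M$ is fully invariant if for every $h:M\to M$ there is $\alpha:K\to K$ with $hk=k\alpha$; an epimorphism $c:M\to C$ is fully coinvariant if for every $h:M\to M$ there is $\gamma:C\to C$ with $ch=\gamma c$. $M$ is self-Rickart if the kernel of every endomorphism $f:M\to M$ is a section; dual self-Rickart if the cokernel of every endomorphism of $M$ is a retraction; strongly self-Rickart if the kernel of every endomorphism of $M$ is a fully invariant section; dual strongly self-Rickart if the cokernel of every endomorphism of $M$ is a fully coinvariant retraction (equivalently its image is a fully invariant section). $M$ is weak duo if every section $K\to M$ is fully invariant (equivalently every retraction $M\to C$ is fully coinvariant). *)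

theory Defs
  imports Main
begin

text \<open>A small, self-contained rendering of abelian categories.
  Arrows have type 'a, objects type 'o.  cmp C g f is the composite g after f.\<close>

record ('o, 'a) acat =
  Ob  :: "'o set"
  Ar  :: "'a set"
  src :: "'a \<Rightarrow> 'o"
  tgt :: "'a \<Rightarrow> 'o"
  cmp :: "'a \<Rightarrow> 'a \<Rightarrow> 'a"
  idt :: "'o \<Rightarrow> 'a"
  add :: "'a \<Rightarrow> 'a \<Rightarrow> 'a"
  neg :: "'a \<Rightarrow> 'a"
  zer :: "'o \<Rightarrow> 'o \<Rightarrow> 'a"

definition hom :: "('o, 'a, 'e) acat_scheme \<Rightarrow> 'o \<Rightarrow> 'o \<Rightarrow> 'a set" where
  "hom C X Y = {f \<in> Ar C. src C f = X \<and> tgt C f = Y}"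

definition category :: "('o, 'a, 'e) acat_scheme \<Rightarrow> bool" where
  "category C \<longleftrightarrow>
     (\<forall>f \<in> Ar C. src C f \<in> Ob C \<and> tgt C f \<in> Ob C) \<and>
     (\<forall>X \<in> Ob C. idt C X \<in> hom C X X) \<and>
     (\<forall>X \<in> Ob C. \<forall>Y \<in> Ob C. \<forall>Z \<in> Ob C. \<forall>f \<in> hom C X Y. \<forall>g \<in> hom C Y Z.
        cmp C g f \<in> hom C X Z) \<and>
     (\<forall>W \<in> Ob C. \<forall>X \<in> Ob C. \<forall>Y \<in> Ob C. \<forall>Z \<in> Ob C.
        \<forall>f \<in> hom C W X. \<forall>g \<in> hom C X Y. \<forall>h \<in> hom C Y Z.
        cmp C h (cmp C g f) = cmp C (cmp C h g) f) \<and>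
     (\<forall>X \<in> Ob C. \<forall>Y \<in> Ob C. \<forall>f \<in> hom C X Y.
        cmp C f (idt C X) = f \<and> cmp C (idt C Y) f = f)"

definition preadditive :: "('o, 'a, 'e) acat_scheme \<Rightarrow> bool" where
  "preadditive C \<longleftrightarrow>
     (\<forall>X \<in> Ob C. \<forall>Y \<in> Ob C.
        zer C X Y \<in> hom C X Y \<and>
        (\<forall>f \<in> hom C X Y. \<forall>g \<in> hom C X Y. add C f g \<in> hom C X Y) \<and>
        (\<forall>f \<in> hom C X Y. neg C f \<in> hom C X Y) \<and>
        (\<forall>f \<in> hom C X Y. \<forall>g \<in> hom C X Y. \<forall>h \<in> hom C X Y.
           add C (add C f g) h = add C f (add C g h)) \<and>
        (\<forall>f \<in> hom C X Y. \<forall>g \<in> hom C X Y. add C f g = add C g f) \<and>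
        (\<forall>f \<in> hom C X Y. add C f (zer C X Y) = f) \<and>
        (\<forall>f \<in> hom C X Y. add C f (neg C f) = zer C X Y)) \<and>
     (\<forall>X \<in> Ob C. \<forall>Y \<in> Ob C. \<forall>Z \<in> Ob C.
        (\<forall>f \<in> hom C X Y. \<forall>g \<in> hom C Y Z. \<forall>h \<in> hom C Y Z.
           cmp C (add C g h) f = add C (cmp C g f) (cmp C h f)) \<and>
        (\<forall>f \<in> hom C X Y. \<forall>g \<in> hom C X Y. \<forall>h \<in> hom C Y Z.
           cmp C h (add C f g) = add C (cmp C h f) (cmp C h g)))"

definition has_zero_object :: "('o, 'a, 'e) acat_scheme \<Rightarrow> bool" where
  "has_zero_object C \<longleftrightarrow>
     (\<exists>Z \<in> Ob C. \<forall>X \<in> Ob C. (\<exists>!f. f \<in> hom C Z X) \<and> (\<exists>!f. f \<in> hom C X Z))"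

definition has_biproducts :: "('o, 'a, 'e) acat_scheme \<Rightarrow> bool" where
  "has_biproducts C \<longleftrightarrow>
     (\<forall>X \<in> Ob C. \<forall>Y \<in> Ob C. \<exists>P \<in> Ob C. \<exists>p1 p2 i1 i2.
        p1 \<in> hom C P X \<and> p2 \<in> hom C P Y \<and> i1 \<in> hom C X P \<and> i2 \<in> hom C Y P \<and>
        cmp C p1 i1 = idt C X \<and> cmp C p2 i2 = idt C Y \<and>
        cmp C p1 i2 = zer C Y X \<and> cmp C p2 i1 = zer C X Y \<and>
        add C (cmp C i1 p1) (cmp C i2 p2) = idt C P)"

definition mono :: "('o, 'a, 'e) acat_scheme \<Rightarrow> 'a \<Rightarrow> bool" where
  "mono C k \<longleftrightarrow> k \<in> Ar C \<and>
     (\<forall>W \<in> Ob C. \<forall>g \<in> hom C W (src C k). \<forall>h \<in> hom C W (src C k).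
        cmp C k g = cmp C k h \<longrightarrow> g = h)"

definition epi :: "('o, 'a, 'e) acat_scheme \<Rightarrow> 'a \<Rightarrow> bool" where
  "epi C c \<longleftrightarrow> c \<in> Ar C \<and>
     (\<forall>W \<in> Ob C. \<forall>g \<in> hom C (tgt C c) W. \<forall>h \<in> hom C (tgt C c) W.
        cmp C g c = cmp C h c \<longrightarrow> g = h)"

definition is_kernel :: "('o, 'a, 'e) acat_scheme \<Rightarrow> 'a \<Rightarrow> 'a \<Rightarrow> bool" where
  "is_kernel C f k \<longleftrightarrow> f \<in> Ar C \<and> k \<in> Ar C \<and> tgt C k = src C f \<and>
     cmp C f k = zer C (src C k) (tgt C f) \<and>
     (\<forall>W \<in> Ob C. \<forall>g \<in> hom C W (src C f).
        cmp C f g = zer C W (tgt C f) \<longrightarrow> (\<exists>!u. u \<in> hom C W (src C k) \<and> cmp C k u = g))"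

definition is_cokernel :: "('o, 'a, 'e) acat_scheme \<Rightarrow> 'a \<Rightarrow> 'a \<Rightarrow> bool" where
  "is_cokernel C f c \<longleftrightarrow> f \<in> Ar C \<and> c \<in> Ar C \<and> src C c = tgt C f \<and>
     cmp C c f = zer C (src C f) (tgt C c) \<and>
     (\<forall>W \<in> Ob C. \<forall>g \<in> hom C (tgt C f) W.
        cmp C g f = zer C (src C f) W \<longrightarrow> (\<exists>!u. u \<in> hom C (tgt C c) W \<and> cmp C u c = g))"

definition abelian :: "('o, 'a, 'e) acat_scheme \<Rightarrow> bool" where
  "abelian C \<longleftrightarrow> category C \<and> preadditive C \<and> has_zero_object C \<and> has_biproducts C \<and>
     (\<forall>f \<in> Ar C. \<exists>k. is_kernel C f k) \<and>
     (\<forall>f \<in> Ar C. \<exists>c. is_cokernel C f c) \<and>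
     (\<forall>k. mono C k \<longrightarrow> (\<exists>f. is_kernel C f k)) \<and>
     (\<forall>c. epi C c \<longrightarrow> (\<exists>f. is_cokernel C f c))"

definition is_section :: "('o, 'a, 'e) acat_scheme \<Rightarrow> 'a \<Rightarrow> bool" where
  "is_section C f \<longleftrightarrow> f \<in> Ar C \<and>
     (\<exists>f' \<in> hom C (tgt C f) (src C f). cmp C f' f = idt C (src C f))"

definition is_retraction :: "('o, 'a, 'e) acat_scheme \<Rightarrow> 'a \<Rightarrow> bool" where
  "is_retraction C f \<longleftrightarrow> f \<in> Ar C \<and>
     (\<exists>f' \<in> hom C (tgt C f) (src C f). cmp C f f' = idt C (tgt C f))"

definition fully_invariant :: "('o, 'a, 'e) acat_scheme \<Rightarrow> 'a \<Rightarrow> bool" where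
  "fully_invariant C k \<longleftrightarrow> mono C k \<and>
     (\<forall>h \<in> hom C (tgt C k) (tgt C k).
        \<exists>\<alpha> \<in> hom C (src C k) (src C k). cmp C h k = cmp C k \<alpha>)"

definition fully_coinvariant :: "('o, 'a, 'e) acat_scheme \<Rightarrow> 'a \<Rightarrow> bool" where
  "fully_coinvariant C c \<longleftrightarrow> epi C c \<and>
     (\<forall>h \<in> hom C (src C c) (src C c).
        \<exists>\<gamma> \<in> hom C (tgt C c) (tgt C c). cmp C c h = cmp C \<gamma> c)"

definition self_rickart :: "('o, 'a, 'e) acat_scheme \<Rightarrow> 'o \<Rightarrow> bool" where
  "self_rickart C M \<longleftrightarrow>
     (\<forall>f \<in> hom C M M. \<forall>k. is_kernel C f k \<longrightarrow> is_section C k)"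

definition dual_self_rickart :: "('o, 'a, 'e) acat_scheme \<Rightarrow> 'o \<Rightarrow> bool" where
  "dual_self_rickart C M \<longleftrightarrow>
     (\<forall>f \<in> hom C M M. \<forall>c. is_cokernel C f c \<longrightarrow> is_retraction C c)"

definition strongly_self_rickart :: "('o, 'a, 'e) acat_scheme \<Rightarrow> 'o \<Rightarrow> bool" where
  "strongly_self_rickart C M \<longleftrightarrow>
     (\<forall>f \<in> hom C M M. \<forall>k. is_kernel C f k \<longrightarrow> fully_invariant C k \<and> is_section C k)"

definition dual_strongly_self_rickart :: "('o, 'a, 'e) acat_scheme \<Rightarrow> 'o \<Rightarrow> bool" where
  "dual_strongly_self_rickart C M \<longleftrightarrow>
     (\<forall>f \<in> hom C M M. \<forall>c. is_cokernel C f c \<longrightarrow> fully_coinvariant C c \<and> is_retraction C c)"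

definition weak_duo :: "('o, 'a, 'e) acat_scheme \<Rightarrow> 'o \<Rightarrow> bool" where
  "weak_duo C M \<longleftrightarrow> (\<forall>k. is_section C k \<and> tgt C k = M \<longrightarrow> fully_invariant C k)"

end

theory Submission
  imports Defs
begin

text \<open>For a section \<open>k : K \<rightarrow> M\<close> with left inverse \<open>k'\<close>, the idempotent \<open>e = k k'\<close>
  has \<open>k\<close> as a kernel of \<open>1 - e\<close> up to isomorphism, and a morphism \<open>x\<close> into \<open>M\<close> factors
  through \<open>k\<close> exactly when \<open>(1 - e) x = 0\<close>.  Hence if the kernel of \<open>1 - e\<close> is fully
  invariant, so is \<open>k\<close>; and if the cokernel \<open>c\<close> of \<open>e\<close> is fully coinvariant, then
  \<open>c h k = \<gamma> c k = 0\<close>, so \<open>h k\<close> factors through \<open>k\<close>.  This shows that both strong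
  Rickart conditions force weak duo.  Conversely, for a retraction \<open>c\<close> with right inverse
  \<open>c'\<close> the kernel of \<open>c\<close> is a section (it splits off \<open>1 - c' c\<close>); weak duo makes it fully
  invariant, and this forces \<open>c h (1 - c' c) = 0\<close>, i.e. \<open>c\<close> is fully coinvariant.\<close>

locale preadditive_category =
  fixes C :: "('o, 'a, 'e) acat_scheme"
  assumes cat: "category C" and pre: "preadditive C"
begin

lemma hom_Ob: "f \<in> hom C X Y \<Longrightarrow> X \<in> Ob C \<and> Y \<in> Ob C"
  using cat unfolding category_def hom_def by auto

lemma hom_src_tgt: "f \<in> hom C X Y \<Longrightarrow> src C f = X \<and> tgt C f = Y"
  unfolding hom_def by auto

lemma Ar_hom: "f \<in> Ar C \<Longrightarrow> f \<in> hom C (src C f) (tgt C f)"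
  unfolding hom_def by auto

lemma cmp_hom[intro]: "f \<in> hom C X Y \<Longrightarrow> g \<in> hom C Y Z \<Longrightarrow> cmp C g f \<in> hom C X Z"
  using cat hom_Ob[of f X Y] hom_Ob[of g Y Z] unfolding category_def by blast

lemma cmp_assoc: "f \<in> hom C W X \<Longrightarrow> g \<in> hom C X Y \<Longrightarrow> h \<in> hom C Y Z \<Longrightarrow>
   cmp C h (cmp C g f) = cmp C (cmp C h g) f"
  using cat hom_Ob[of f W X] hom_Ob[of h Y Z] unfolding category_def by blast

lemma idt_hom[intro]: "X \<in> Ob C \<Longrightarrow> idt C X \<in> hom C X X"
  using cat unfolding category_def by blast

lemma cmp_idt_right: "f \<in> hom C X Y \<Longrightarrow> cmp C f (idt C X) = f"
  using cat hom_Ob[of f X Y] unfolding category_def by blast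

lemma cmp_idt_left: "f \<in> hom C X Y \<Longrightarrow> cmp C (idt C Y) f = f"
  using cat hom_Ob[of f X Y] unfolding category_def by blast

lemma zer_hom[intro]: "X \<in> Ob C \<Longrightarrow> Y \<in> Ob C \<Longrightarrow> zer C X Y \<in> hom C X Y"
  using pre unfolding preadditive_def by blast

lemma add_hom[intro]: "f \<in> hom C X Y \<Longrightarrow> g \<in> hom C X Y \<Longrightarrow> add C f g \<in> hom C X Y"
  using pre hom_Ob[of f X Y] unfolding preadditive_def by blast

lemma neg_hom[intro]: "f \<in> hom C X Y \<Longrightarrow> neg C f \<in> hom C X Y"
  using pre hom_Ob[of f X Y] unfolding preadditive_def by blast

lemma add_assoc: "f \<in> hom C X Y \<Longrightarrow> g \<in> hom C X Y \<Longrightarrow> h \<in> hom C X Y \<Longrightarrow>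
   add C (add C f g) h = add C f (add C g h)"
  using pre hom_Ob[of f X Y] unfolding preadditive_def by blast

lemma add_commute: "f \<in> hom C X Y \<Longrightarrow> g \<in> hom C X Y \<Longrightarrow> add C f g = add C g f"
  using pre hom_Ob[of f X Y] unfolding preadditive_def by blast

lemma add_zer_right: "f \<in> hom C X Y \<Longrightarrow> add C f (zer C X Y) = f"
  using pre hom_Ob[of f X Y] unfolding preadditive_def by blast

lemma add_zer_left: "f \<in> hom C X Y \<Longrightarrow> add C (zer C X Y) f = f"
  using add_commute add_zer_right hom_Ob zer_hom by metis

lemma add_neg_right: "f \<in> hom C X Y \<Longrightarrow> add C f (neg C f) = zer C X Y"
  using pre hom_Ob[of f X Y] unfolding preadditive_def by blast

lemma cmp_add_left: "f \<in> hom C X Y \<Longrightarrow> g \<in> hom C Y Z \<Longrightarrow> h \<in> hom C Y Z \<Longrightarrow>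
   cmp C (add C g h) f = add C (cmp C g f) (cmp C h f)"
  using pre hom_Ob[of f X Y] hom_Ob[of g Y Z] unfolding preadditive_def by blast

lemma cmp_add_right:
  assumes "f \<in> hom C X Y" "g \<in> hom C X Y" "h \<in> hom C Y Z"
  shows "cmp C h (add C f g) = add C (cmp C h f) (cmp C h g)"
proof -
  have "\<forall>X \<in> Ob C. \<forall>Y \<in> Ob C. \<forall>Z \<in> Ob C. \<forall>f \<in> hom C X Y. \<forall>g \<in> hom C X Y. \<forall>h \<in> hom C Y Z.
          cmp C h (add C f g) = add C (cmp C h f) (cmp C h g)"
    using pre unfolding preadditive_def by (simp add: ball_conj_distrib)
  then show ?thesis using assms hom_Ob[OF assms(1)] hom_Ob[OF assms(3)] by blast
qed

lemma neg_unique: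
  assumes x: "x \<in> hom C X Y" and y: "y \<in> hom C X Y" and sum: "add C x y = zer C X Y"
  shows "y = neg C x"
proof -
  have "y = add C y (add C x (neg C x))" using add_zer_right[OF y] add_neg_right[OF x] by simp
  also have "\<dots> = add C (add C x y) (neg C x)"
    using add_assoc[OF y x neg_hom[OF x]] add_commute[OF x y] by simp
  also have "\<dots> = neg C x" using sum add_zer_left[OF neg_hom[OF x]] by simp
  finally show ?thesis .
qed

lemma neg_neg: "y \<in> hom C X Y \<Longrightarrow> neg C (neg C y) = y"
  using neg_unique[of "neg C y" X Y y] add_commute add_neg_right neg_hom by metis

lemma neg_zer: "X \<in> Ob C \<Longrightarrow> Y \<in> Ob C \<Longrightarrow> neg C (zer C X Y) = zer C X Y"
  using neg_unique[of "zer C X Y" X Y "zer C X Y"] add_zer_right zer_hom by metis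

lemma eq_if_diff_zer:
  assumes x: "x \<in> hom C X Y" and y: "y \<in> hom C X Y" and diff: "add C x (neg C y) = zer C X Y"
  shows "x = y"
proof -
  have "add C (neg C y) x = zer C X Y" using diff add_commute[OF x neg_hom[OF y]] by simp
  then have "x = neg C (neg C y)" using neg_unique[OF neg_hom[OF y] x] by simp
  then show ?thesis using neg_neg[OF y] by simp
qed

lemma zer_if_add_self:
  assumes a: "a \<in> hom C X Y" and self: "add C a a = a"
  shows "a = zer C X Y"
  using eq_if_diff_zer[OF cmp_hom zer_hom] add_assoc[OF a a neg_hom[OF a]] add_neg_right[OF a]
    add_zer_right[OF a] self by metis

lemma cmp_zer_left:
  assumes f: "f \<in> hom C X Y" and Z: "Z \<in> Ob C"
  shows "cmp C (zer C Y Z) f = zer C X Z"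
proof -
  have z: "zer C Y Z \<in> hom C Y Z" using hom_Ob[OF f] Z by blast
  have "add C (cmp C (zer C Y Z) f) (cmp C (zer C Y Z) f) = cmp C (zer C Y Z) f"
    using cmp_add_left[OF f z z] add_zer_right[OF z] by simp
  then show ?thesis using zer_if_add_self cmp_hom[OF f z] by blast
qed

lemma cmp_zer_right:
  assumes f: "f \<in> hom C Y Z" and X: "X \<in> Ob C"
  shows "cmp C f (zer C X Y) = zer C X Z"
proof -
  have z: "zer C X Y \<in> hom C X Y" using hom_Ob[OF f] X by blast
  have "add C (cmp C f (zer C X Y)) (cmp C f (zer C X Y)) = cmp C f (zer C X Y)"
    using cmp_add_right[OF z z f] add_zer_right[OF z] by simp
  then show ?thesis using zer_if_add_self cmp_hom[OF z f] by blast
qed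

lemma cmp_neg_left:
  assumes f: "f \<in> hom C X Y" and g: "g \<in> hom C Y Z"
  shows "cmp C (neg C g) f = neg C (cmp C g f)"
proof -
  have "add C (cmp C g f) (cmp C (neg C g) f) = zer C X Z"
    using cmp_add_left[OF f g neg_hom[OF g], symmetric] add_neg_right[OF g]
      cmp_zer_left[OF f] hom_Ob[OF g] by simp
  then show ?thesis using neg_unique cmp_hom f g neg_hom by metis
qed

lemma cmp_neg_right:
  assumes f: "f \<in> hom C X Y" and g: "g \<in> hom C Y Z"
  shows "cmp C g (neg C f) = neg C (cmp C g f)"
proof -
  have "add C (cmp C g f) (cmp C g (neg C f)) = zer C X Z"
    using cmp_add_right[OF f neg_hom[OF f] g, symmetric] add_neg_right[OF f]
      cmp_zer_right[OF g] hom_Ob[OF f] by simp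
  then show ?thesis using neg_unique cmp_hom f g neg_hom by metis
qed

definition one_minus :: "'o \<Rightarrow> 'a \<Rightarrow> 'a" where
  "one_minus M p = add C (idt C M) (neg C p)"

lemma one_minus_hom[intro]: "p \<in> hom C M M \<Longrightarrow> one_minus M p \<in> hom C M M"
  unfolding one_minus_def using hom_Ob by blast

lemma cmp_one_minus_left:
  assumes p: "p \<in> hom C M M" and x: "x \<in> hom C W M"
  shows "cmp C (one_minus M p) x = add C x (neg C (cmp C p x))"
  using cmp_add_left[OF x idt_hom neg_hom[OF p]] cmp_idt_left[OF x] cmp_neg_left[OF x p] hom_Ob[OF p]
  unfolding one_minus_def by simp

lemma cmp_one_minus_right:
  assumes p: "p \<in> hom C M M" and x: "x \<in> hom C M W"
  shows "cmp C x (one_minus M p) = add C x (neg C (cmp C x p))"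
  using cmp_add_right[OF idt_hom neg_hom[OF p] x] cmp_idt_right[OF x] cmp_neg_right[OF p x] hom_Ob[OF p]
  unfolding one_minus_def by simp

lemma one_minus_left_zer_iff:
  assumes "p \<in> hom C M M" "x \<in> hom C W M"
  shows "cmp C (one_minus M p) x = zer C W M \<longleftrightarrow> cmp C p x = x"
  using cmp_one_minus_left[OF assms] eq_if_diff_zer[OF assms(2) cmp_hom[OF assms(2,1)]]
    add_neg_right[OF assms(2)] by metis

lemma one_minus_right_zer_iff:
  assumes "p \<in> hom C M M" "x \<in> hom C M W"
  shows "cmp C x (one_minus M p) = zer C M W \<longleftrightarrow> cmp C x p = x"
  using cmp_one_minus_right[OF assms] eq_if_diff_zer[OF assms(2) cmp_hom[OF assms(1,2)]]
    add_neg_right[OF assms(2)] by metis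

lemma cmp_one_minus_if_zer:
  assumes p: "p \<in> hom C M M" and x: "x \<in> hom C W M" and px: "cmp C p x = zer C W M"
  shows "cmp C (one_minus M p) x = x"
  using cmp_one_minus_left[OF p x] px neg_zer add_zer_right[OF x] hom_Ob[OF x] by simp

lemma kernel_hom:
  "is_kernel C f k \<Longrightarrow> k \<in> hom C (src C k) (src C f) \<and> cmp C f k = zer C (src C k) (tgt C f)"
  unfolding is_kernel_def hom_def by auto

lemma kernel_factors:
  assumes "is_kernel C f k" "g \<in> hom C W (src C f)" "cmp C f g = zer C W (tgt C f)"
  obtains u where "u \<in> hom C W (src C k)" "cmp C k u = g"
proof -
  have "W \<in> Ob C" using hom_Ob[OF assms(2)] ..
  then have "\<exists>!u. u \<in> hom C W (src C k) \<and> cmp C k u = g"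
    using assms unfolding is_kernel_def by blast
  then show thesis using that by blast
qed

lemma cokernel_hom:
  "is_cokernel C f c \<Longrightarrow> c \<in> hom C (tgt C f) (tgt C c) \<and> cmp C c f = zer C (src C f) (tgt C c)"
  unfolding is_cokernel_def hom_def by auto

lemma cokernel_factors:
  assumes "is_cokernel C f c" "g \<in> hom C (tgt C f) W" "cmp C g f = zer C (src C f) W"
  obtains u where "u \<in> hom C (tgt C c) W" "cmp C u c = g"
proof -
  have "W \<in> Ob C" using hom_Ob[OF assms(2)] ..
  then have "\<exists>!u. u \<in> hom C (tgt C c) W \<and> cmp C u c = g"
    using assms unfolding is_cokernel_def by blast
  then show thesis using that by blast
qed

lemma kernel_mono:
  assumes ker: "is_kernel C f k"
  shows "mono C k"
  unfolding mono_def
proof (intro conjI ballI impI)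
  show "k \<in> Ar C" using ker unfolding is_kernel_def by blast
  have k: "k \<in> hom C (src C k) (src C f)" and fk: "cmp C f k = zer C (src C k) (tgt C f)"
    using kernel_hom[OF ker] by auto
  have f: "f \<in> hom C (src C f) (tgt C f)" using ker Ar_hom unfolding is_kernel_def by blast
  fix W g h assume g: "g \<in> hom C W (src C k)" and h: "h \<in> hom C W (src C k)"
    and kg_kh: "cmp C k g = cmp C k h"
  have fkg: "cmp C f (cmp C k g) = zer C W (tgt C f)"
    using cmp_assoc[OF g k f] fk cmp_zer_left[OF g] hom_Ob[OF f] by simp
  have universal: "\<forall>W\<in>Ob C. \<forall>g\<in>hom C W (src C f). cmp C f g = zer C W (tgt C f) \<longrightarrow>
      (\<exists>!u. u \<in> hom C W (src C k) \<and> cmp C k u = g)"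
    using ker unfolding is_kernel_def by (elim conjE)
  have "\<exists>!u. u \<in> hom C W (src C k) \<and> cmp C k u = cmp C k g"
    using universal[rule_format, OF conjunct1[OF hom_Ob[OF g]] cmp_hom[OF g k] fkg] .
  then show "g = h" using g h kg_kh by (metis (no_types, lifting))
qed

lemma section_mono:
  assumes sec: "is_section C k"
  shows "mono C k"
  unfolding mono_def
proof (intro conjI ballI impI)
  show "k \<in> Ar C" using sec unfolding is_section_def by blast
  obtain k' where k': "k' \<in> hom C (tgt C k) (src C k)" "cmp C k' k = idt C (src C k)"
    using sec unfolding is_section_def by blast
  have k: "k \<in> hom C (src C k) (tgt C k)" using sec Ar_hom unfolding is_section_def by blast
  fix W g h assume g: "g \<in> hom C W (src C k)" and h: "h \<in> hom C W (src C k)"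
    and kg_kh: "cmp C k g = cmp C k h"
  have "g = cmp C k' (cmp C k g)" using cmp_assoc[OF g k k'(1)] k'(2) cmp_idt_left[OF g] by simp
  also have "\<dots> = h" using kg_kh cmp_assoc[OF h k k'(1)] k'(2) cmp_idt_left[OF h] by simp
  finally show "g = h" .
qed

lemma retraction_epi:
  assumes ret: "is_retraction C c"
  shows "epi C c"
  unfolding epi_def
proof (intro conjI ballI impI)
  show "c \<in> Ar C" using ret unfolding is_retraction_def by blast
  obtain c' where c': "c' \<in> hom C (tgt C c) (src C c)" "cmp C c c' = idt C (tgt C c)"
    using ret unfolding is_retraction_def by blast
  have c: "c \<in> hom C (src C c) (tgt C c)" using ret Ar_hom unfolding is_retraction_def by blast
  fix W g h assume g: "g \<in> hom C (tgt C c) W" and h: "h \<in> hom C (tgt C c) W"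
    and gc_hc: "cmp C g c = cmp C h c"
  have "g = cmp C (cmp C g c) c'" using cmp_assoc[OF c'(1) c g] c'(2) cmp_idt_right[OF g] by simp
  also have "\<dots> = h" using gc_hc cmp_assoc[OF c'(1) c h] c'(2) cmp_idt_right[OF h] by simp
  finally show "g = h" .
qed

lemma section_left_inverse:
  assumes "is_section C k" "tgt C k = M"
  obtains K k' where "k \<in> hom C K M" "k' \<in> hom C M K" "cmp C k' k = idt C K"
  using assms Ar_hom unfolding is_section_def by blast

lemma split_idempotent_fixes_section:
  assumes k: "k \<in> hom C K M" and k': "k' \<in> hom C M K" and k'k: "cmp C k' k = idt C K"
  shows "cmp C (cmp C k k') k = k"
  using cmp_assoc[OF k k' k] k'k cmp_idt_right[OF k] by simp

lemma fully_invariant_if_same_subobject: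
  assumes mono: "mono C k" and inv: "fully_invariant C j"
    and k: "k \<in> hom C K M" and j: "j \<in> hom C J M"
    and u: "u \<in> hom C K J" "cmp C j u = k" and v: "v \<in> hom C J K" "cmp C k v = j"
  shows "fully_invariant C k"
  unfolding fully_invariant_def
proof (intro conjI ballI)
  show "mono C k" by (rule mono)
  fix h assume "h \<in> hom C (tgt C k) (tgt C k)"
  then have h: "h \<in> hom C M M" using k unfolding hom_def by simp
  obtain \<beta> where \<beta>: "\<beta> \<in> hom C J J" "cmp C h j = cmp C j \<beta>"
    using inv h j unfolding fully_invariant_def hom_def by auto
  have "cmp C h k = cmp C (cmp C h j) u" using u cmp_assoc[OF u(1) j h] by simp
  also have "\<dots> = cmp C k (cmp C v (cmp C \<beta> u))"
    using \<beta> v cmp_assoc[OF u(1) \<beta>(1) j] cmp_assoc[OF cmp_hom[OF u(1) \<beta>(1)] v(1) k] by simp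
  finally have "cmp C h k = cmp C k (cmp C v (cmp C \<beta> u))" .
  moreover have "cmp C v (cmp C \<beta> u) \<in> hom C K K" using u(1) \<beta>(1) v(1) by blast
  moreover have "src C k = K" using k unfolding hom_def by simp
  ultimately show "\<exists>\<alpha>\<in>hom C (src C k) (src C k). cmp C h k = cmp C k \<alpha>" by auto
qed

lemma weak_duo_if_kernels_fully_invariant:
  assumes kernels: "\<forall>f\<in>hom C M M. \<exists>k. is_kernel C f k"
    and inv: "\<forall>f\<in>hom C M M. \<forall>k. is_kernel C f k \<longrightarrow> fully_invariant C k"
  shows "weak_duo C M"
  unfolding weak_duo_def
proof (intro allI impI, elim conjE)
  fix k assume sec: "is_section C k" and tk: "tgt C k = M"
  then obtain K k' where k: "k \<in> hom C K M" and k': "k' \<in> hom C M K" "cmp C k' k = idt C K"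
    by (rule section_left_inverse)
  define e where "e = cmp C k k'"
  have e: "e \<in> hom C M M" unfolding e_def using k k' by blast
  obtain j where ker: "is_kernel C (one_minus M e) j" using kernels e by blast
  define J where "J = src C j"
  have ends: "src C (one_minus M e) = M" "tgt C (one_minus M e) = M"
    using hom_src_tgt[OF one_minus_hom[OF e]] by auto
  have j: "j \<in> hom C J M" and ej: "cmp C e j = j"
    using kernel_hom[OF ker] one_minus_left_zer_iff[OF e] unfolding ends J_def by auto
  have "cmp C e k = k" unfolding e_def using split_idempotent_fixes_section[OF k k'] .
  then have "cmp C (one_minus M e) k = zer C K (tgt C (one_minus M e))"
    using one_minus_left_zer_iff[OF e k] unfolding ends by simp
  then obtain u where u: "u \<in> hom C K J" "cmp C j u = k"
    using kernel_factors[OF ker] k unfolding ends J_def by blast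
  have "cmp C k (cmp C k' j) = j" using ej cmp_assoc[OF j k'(1) k] unfolding e_def by simp
  then show "fully_invariant C k"
    by (rule fully_invariant_if_same_subobject[OF section_mono[OF sec]
          inv[rule_format, OF one_minus_hom[OF e] ker] k j u cmp_hom[OF j k'(1)]])
qed

lemma weak_duo_if_cokernels_fully_coinvariant:
  assumes cokernels: "\<forall>f\<in>hom C M M. \<exists>c. is_cokernel C f c"
    and coinv: "\<forall>f\<in>hom C M M. \<forall>c. is_cokernel C f c \<longrightarrow> fully_coinvariant C c"
  shows "weak_duo C M"
  unfolding weak_duo_def
proof (intro allI impI, elim conjE)
  fix k assume sec: "is_section C k" and tk: "tgt C k = M"
  then obtain K k' where k: "k \<in> hom C K M" and k': "k' \<in> hom C M K" "cmp C k' k = idt C K"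
    by (rule section_left_inverse)
  define e where "e = cmp C k k'"
  have e: "e \<in> hom C M M" unfolding e_def using k k' by blast
  have ek: "cmp C e k = k" unfolding e_def using split_idempotent_fixes_section[OF k k'] .
  have "cmp C e e = e" using ek cmp_assoc[OF k'(1) k e] unfolding e_def by simp
  then have e_kills: "cmp C (one_minus M e) e = zer C M M" using one_minus_left_zer_iff[OF e e] by simp
  obtain c where coker: "is_cokernel C e c" using cokernels e by blast
  define Q where "Q = tgt C c"
  have ends: "src C e = M" "tgt C e = M" using hom_src_tgt[OF e] by auto
  have c: "c \<in> hom C M Q" and ce: "cmp C c e = zer C M Q"
    using cokernel_hom[OF coker] unfolding ends Q_def by auto
  obtain u where u: "u \<in> hom C Q M" "cmp C u c = one_minus M e"
    using cokernel_factors[OF coker] e_kills one_minus_hom[OF e] unfolding ends Q_def by blast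
  have "cmp C c k = cmp C (cmp C c e) k" using ek cmp_assoc[OF k e c] by simp
  then have ck: "cmp C c k = zer C K Q" using ce cmp_zer_left[OF k] hom_Ob[OF c] by simp
  show "fully_invariant C k"
    unfolding fully_invariant_def
  proof (intro conjI ballI)
    show "mono C k" using section_mono[OF sec] .
    fix h assume "h \<in> hom C (tgt C k) (tgt C k)"
    then have h: "h \<in> hom C M M" using tk by simp
    obtain \<gamma> where \<gamma>: "\<gamma> \<in> hom C Q Q" "cmp C c h = cmp C \<gamma> c"
      using coinv[rule_format, OF e coker] h hom_src_tgt[OF c] unfolding fully_coinvariant_def Q_def
      by auto
    have hk: "cmp C h k \<in> hom C K M" using h k by blast
    have "cmp C (one_minus M e) (cmp C h k) = cmp C u (cmp C (cmp C c h) k)"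
      using u cmp_assoc[OF hk c u(1)] cmp_assoc[OF k h c] by simp
    also have "\<dots> = cmp C u (cmp C \<gamma> (cmp C c k))" using \<gamma> cmp_assoc[OF k c \<gamma>(1)] by simp
    also have "\<dots> = zer C K M"
      using ck cmp_zer_right[OF \<gamma>(1)] cmp_zer_right[OF u(1)] hom_Ob[OF k] by simp
    finally have "cmp C e (cmp C h k) = cmp C h k" using one_minus_left_zer_iff[OF e hk] by simp
    then have "cmp C h k = cmp C k (cmp C k' (cmp C h k))"
      using cmp_assoc[OF hk k'(1) k] unfolding e_def by simp
    moreover have "cmp C k' (cmp C h k) \<in> hom C K K" using hk k'(1) by blast
    moreover have "src C k = K" using hom_src_tgt[OF k] by simp
    ultimately show "\<exists>\<alpha>\<in>hom C (src C k) (src C k). cmp C h k = cmp C k \<alpha>" by auto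
  qed
qed

lemma retraction_fully_coinvariant_if_weak_duo:
  assumes duo: "weak_duo C M" and ret: "is_retraction C c" and src: "src C c = M"
    and ker: "is_kernel C c k"
  shows "fully_coinvariant C c"
proof -
  define Q K where "Q = tgt C c" and "K = src C k"
  obtain c' where c': "c' \<in> hom C Q M" "cmp C c c' = idt C Q"
    using ret src unfolding is_retraction_def Q_def by blast
  have c: "c \<in> hom C M Q" using ret src Ar_hom unfolding is_retraction_def Q_def by blast
  define q where "q = cmp C c' c"
  have q: "q \<in> hom C M M" unfolding q_def using c c' by blast
  have "cmp C c q = c" unfolding q_def using cmp_assoc[OF c c'(1) c] c' cmp_idt_left[OF c] by simp
  then have q_kills: "cmp C c (one_minus M q) = zer C M Q" using one_minus_right_zer_iff[OF q c] by simp
  have k: "k \<in> hom C K M" and ck: "cmp C c k = zer C K Q"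
    using kernel_hom[OF ker] unfolding src K_def Q_def by auto
  obtain k' where k': "k' \<in> hom C M K" "cmp C k k' = one_minus M q"
    using kernel_factors[OF ker] one_minus_hom[OF q] q_kills unfolding src K_def Q_def by blast
  have "cmp C q k = zer C K M"
    unfolding q_def using cmp_assoc[OF k c c'(1)] ck cmp_zer_right[OF c'(1)] hom_Ob[OF k] by simp
  then have "cmp C k (cmp C k' k) = cmp C k (idt C K)"
    using cmp_one_minus_if_zer[OF q k] cmp_assoc[OF k k'(1) k] k'(2) cmp_idt_right[OF k] by simp
  moreover have "K \<in> Ob C" using hom_Ob[OF k] by simp
  ultimately have "cmp C k' k = idt C K"
    using kernel_mono[OF ker] cmp_hom[OF k k'(1)] unfolding mono_def K_def by blast
  then have "is_section C k" using k k' hom_src_tgt[OF k] unfolding is_section_def hom_def by auto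
  then have inv: "fully_invariant C k" using duo hom_src_tgt[OF k] unfolding weak_duo_def by blast
  show ?thesis
    unfolding fully_coinvariant_def
  proof (intro conjI ballI)
    show "epi C c" using retraction_epi[OF ret] .
    fix h assume "h \<in> hom C (src C c) (src C c)"
    then have h: "h \<in> hom C M M" using src by simp
    obtain \<alpha> where \<alpha>: "\<alpha> \<in> hom C K K" "cmp C h k = cmp C k \<alpha>"
      using inv h k unfolding fully_invariant_def hom_def K_def by auto
    have ch: "cmp C c h \<in> hom C M Q" using h c by blast
    have "cmp C (cmp C c h) (one_minus M q) = cmp C (cmp C c (cmp C h k)) k'"
      using k'(2) cmp_assoc[OF k'(1) k ch] cmp_assoc[OF k h c] by simp
    also have "\<dots> = cmp C (cmp C (cmp C c k) \<alpha>) k'" using \<alpha> cmp_assoc[OF \<alpha>(1) k c] by simp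
    also have "\<dots> = zer C M Q"
      using ck cmp_zer_left[OF \<alpha>(1)] cmp_zer_left[OF k'(1)] hom_Ob[OF c] by simp
    finally have "cmp C (cmp C c h) q = cmp C c h" using one_minus_right_zer_iff[OF q ch] by simp
    then have "cmp C c h = cmp C (cmp C (cmp C c h) c') c"
      using cmp_assoc[OF c c'(1) ch] unfolding q_def by simp
    moreover have "cmp C (cmp C c h) c' \<in> hom C Q Q" using ch c'(1) by blast
    ultimately show "\<exists>\<gamma>\<in>hom C (tgt C c) (tgt C c). cmp C c h = cmp C \<gamma> c"
      unfolding Q_def by blast
  qed
qed

lemma strongly_self_rickart_iff:
  assumes kernels: "\<forall>f\<in>hom C M M. \<exists>k. is_kernel C f k"
  shows "strongly_self_rickart C M \<longleftrightarrow> self_rickart C M \<and> weak_duo C M"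
proof
  assume strong: "strongly_self_rickart C M"
  then have "\<forall>f\<in>hom C M M. \<forall>k. is_kernel C f k \<longrightarrow> fully_invariant C k"
    unfolding strongly_self_rickart_def by blast
  then have "weak_duo C M" by (rule weak_duo_if_kernels_fully_invariant[OF kernels])
  moreover have "self_rickart C M"
    using strong unfolding strongly_self_rickart_def self_rickart_def by blast
  ultimately show "self_rickart C M \<and> weak_duo C M" by blast
next
  assume rickart_duo: "self_rickart C M \<and> weak_duo C M"
  show "strongly_self_rickart C M"
    unfolding strongly_self_rickart_def
  proof (intro ballI allI impI)
    fix f k assume f: "f \<in> hom C M M" and ker: "is_kernel C f k"
    have "is_section C k" using rickart_duo f ker unfolding self_rickart_def by blast
    moreover have "tgt C k = M" using kernel_hom[OF ker] hom_src_tgt[OF f] by (simp add: hom_def)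
    ultimately show "fully_invariant C k \<and> is_section C k"
      using rickart_duo unfolding weak_duo_def by blast
  qed
qed

lemma dual_strongly_self_rickart_iff:
  assumes kernels: "\<forall>f\<in>Ar C. \<exists>k. is_kernel C f k"
    and cokernels: "\<forall>f\<in>hom C M M. \<exists>c. is_cokernel C f c"
  shows "dual_strongly_self_rickart C M \<longleftrightarrow> dual_self_rickart C M \<and> weak_duo C M"
proof
  assume strong: "dual_strongly_self_rickart C M"
  then have "\<forall>f\<in>hom C M M. \<forall>c. is_cokernel C f c \<longrightarrow> fully_coinvariant C c"
    unfolding dual_strongly_self_rickart_def by blast
  then have "weak_duo C M" by (rule weak_duo_if_cokernels_fully_coinvariant[OF cokernels])
  moreover have "dual_self_rickart C M"
    using strong unfolding dual_strongly_self_rickart_def dual_self_rickart_def by blast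
  ultimately show "dual_self_rickart C M \<and> weak_duo C M" by blast
next
  assume rickart_duo: "dual_self_rickart C M \<and> weak_duo C M"
  show "dual_strongly_self_rickart C M"
    unfolding dual_strongly_self_rickart_def
  proof (intro ballI allI impI)
    fix f c assume f: "f \<in> hom C M M" and coker: "is_cokernel C f c"
    have ret: "is_retraction C c" using rickart_duo f coker unfolding dual_self_rickart_def by blast
    have "src C c = M" using cokernel_hom[OF coker] hom_src_tgt[OF f] by (simp add: hom_def)
    moreover obtain k where "is_kernel C c k"
      using kernels cokernel_hom[OF coker] unfolding hom_def by blast
    ultimately have "fully_coinvariant C c"
      using retraction_fully_coinvariant_if_weak_duo[OF _ ret] rickart_duo by blast
    then show "fully_coinvariant C c \<and> is_retraction C c" using ret ..
  qed
qed

end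

theorem corollary2p10:
  fixes C :: "('o, 'a, 'e) acat_scheme" and M :: 'o
  assumes "abelian C" and "M \<in> Ob C"
  shows "(strongly_self_rickart C M \<longleftrightarrow> self_rickart C M \<and> weak_duo C M) \<and>
         (dual_strongly_self_rickart C M \<longleftrightarrow> dual_self_rickart C M \<and> weak_duo C M)"
proof -
  interpret preadditive_category C
    using assms(1) unfolding abelian_def by unfold_locales auto
  have kernels: "\<forall>f\<in>Ar C. \<exists>k. is_kernel C f k" and cokernels: "\<forall>f\<in>Ar C. \<exists>c. is_cokernel C f c"
    using assms(1) unfolding abelian_def by auto
  then have "\<forall>f\<in>hom C M M. \<exists>k. is_kernel C f k" and "\<forall>f\<in>hom C M M. \<exists>c. is_cokernel C f c"
    unfolding hom_def by auto
  then show ?thesis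
    using strongly_self_rickart_iff dual_strongly_self_rickart_iff[OF kernels] by blast
qed

end
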